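(* In a partial synchronized communication system, at any time, the length of a path along a ring between any two robots lying in the same ring is an element of $2\pi\mathbb{N}$ (a nonnegative integer multiple of $2\pi$).
   Context: Model. A system consists of pairwise disjoint unit circles $C_1,\dots,C_n$ in the plane (trajectories) and a communication range $r>0$. Its communication graph $G$ has vertex set $\{C_1,\dots,C_n\}$, $C_i,C_j$ adjacent iff the distance between their centres is at most $2+r$. Positions on a circle are angles (mod $2\pi$). For an edge $(i,j)$, the link position $\phi_{ij}$ is the angle of the point of $C_i$ closest to $C_j$. A schedule $F=(f,g)$ assigns each circle a starting angle $f(C_i)$ and direction $g(C_i)\in\{1,-1\}$; a robot following it on $C_i$ is at $f(C_i)+g(C_i)2\pi t$ at time $t$. $F$ is a synchronization schedule if $g(C_i)=-g(C_j)$ for adjacent circles and robots following $F$ on adjacent $C_i,C_j$ are at $\phi_{ij},\phi_{ji}$ at exactly the same times. A synchronized communication system (SCS) consists of $n$ robots, initially one per circle, following a synchronization schedule, with the switching rule: when a robot on $C_i$ reaches $\phi_{ij}$ and $C_j$ is empty, it instantly passes to $C_j$ and from then on follows the schedule of $C_j$; if $C_j$ has a robot, they meet and each stays on its circle. A partial SCS arises by letting some robots leave (possibly at different times); remaining robots never leave. Rings. Trace a point moving along a circle $C_i$ in direction $g(C_i)$; whenever it reaches a link position $\phi_{ij}$ of its current circle, it passes to $C_j$ at $\phi_{ji}$ and continues in direction $g(C_j)$. The closed, directed curve traced is a ring; the circles decompose into rings overlapping only at link positions. A path along a ring from one point to another follows the ring in its direction of motion; its length is the total length of the circle arcs it consists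 of (passing between circles at link positions costs no length). A robot is in a ring if it lies on a point of that ring. *)

theory Defs
  imports "HOL-Analysis.Analysis"
begin

text \<open>Trajectories: unit circles indexed by a finite type 'c, circle i has centre cen i.
  The point of circle i at angle a is cen i + cis a.  Angles are reals taken mod 2 pi.\<close>

definition ang_eq :: "real \<Rightarrow> real \<Rightarrow> bool" where
  "ang_eq a b \<longleftrightarrow> (\<exists>m::int. a - b = 2 * pi * of_int m)"

definition adj :: "('c \<Rightarrow> complex) \<Rightarrow> real \<Rightarrow> 'c \<Rightarrow> 'c \<Rightarrow> bool" where
  "adj cen r i j \<longleftrightarrow> i \<noteq> j \<and> cmod (cen i - cen j) \<le> 2 + r"

text \<open>Link position: angle of the point of C_i closest to C_j.\<close>
definition link :: "('c \<Rightarrow> complex) \<Rightarrow> 'c \<Rightarrow> 'c \<Rightarrow> real" where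
  "link cen i j = Arg (cen j - cen i)"

definition spos :: "('c \<Rightarrow> real) \<Rightarrow> ('c \<Rightarrow> real) \<Rightarrow> 'c \<Rightarrow> real \<Rightarrow> real" where
  "spos f g i t = f i + g i * (2 * pi * t)"

definition sync_schedule ::
  "('c \<Rightarrow> complex) \<Rightarrow> real \<Rightarrow> ('c \<Rightarrow> real) \<Rightarrow> ('c \<Rightarrow> real) \<Rightarrow> bool" where
  "sync_schedule cen r f g \<longleftrightarrow>
     (\<forall>i. g i = 1 \<or> g i = -1) \<and>
     (\<forall>i j. adj cen r i j \<longrightarrow>
        g i = - g j \<and>
        (\<forall>t. ang_eq (spos f g i t) (link cen i j) \<longleftrightarrow> ang_eq (spos f g j t) (link cen j i)))"

text \<open>Robots are identified with their initial circles.  Robot k is present at time t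
  iff 0 <= t < leave k (leave k = \<infinity> means it never leaves).  loc k t is the circle
  robot k is on at time t; a present robot is at angle spos f g (loc k t) t.\<close>

definition present :: "('c \<Rightarrow> ereal) \<Rightarrow> 'c \<Rightarrow> real \<Rightarrow> bool" where
  "present leave k t \<longleftrightarrow> 0 \<le> t \<and> ereal t < leave k"

definition loc_before :: "(real \<Rightarrow> 'c) \<Rightarrow> real \<Rightarrow> 'c \<Rightarrow> bool" where
  "loc_before l t i \<longleftrightarrow> (\<exists>e>0. \<forall>s. t - e < s \<and> s < t \<longrightarrow> l s = i)"

definition loc_after :: "(real \<Rightarrow> 'c) \<Rightarrow> real \<Rightarrow> bool" where
  "loc_after l t \<longleftrightarrow> (\<exists>e>0. \<forall>s. t \<le> s \<and> s < t + e \<longrightarrow> l s = l t)"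

definition occupied_before ::
  "('c \<Rightarrow> ereal) \<Rightarrow> ('c \<Rightarrow> real \<Rightarrow> 'c) \<Rightarrow> 'c \<Rightarrow> real \<Rightarrow> 'c \<Rightarrow> bool" where
  "occupied_before leave loc k t j \<longleftrightarrow>
     (\<exists>k'. k' \<noteq> k \<and> present leave k' t \<and> loc_before (loc k') t j)"

definition partial_scs ::
  "('c \<Rightarrow> complex) \<Rightarrow> real \<Rightarrow> ('c \<Rightarrow> real) \<Rightarrow> ('c \<Rightarrow> real) \<Rightarrow>
   ('c \<Rightarrow> ereal) \<Rightarrow> ('c \<Rightarrow> real \<Rightarrow> 'c) \<Rightarrow> bool" where
  "partial_scs cen r f g leave loc \<longleftrightarrow>
     r > 0 \<and>
     (\<forall>i j. i \<noteq> j \<longrightarrow> cmod (cen i - cen j) > 2) \<and>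
     sync_schedule cen r f g \<and>
     (\<forall>k. loc k 0 = k) \<and>
     (\<forall>k t. present leave k t \<longrightarrow> loc_after (loc k) t) \<and>
     (\<forall>k t. present leave k t \<and> t > 0 \<longrightarrow> (\<exists>i. loc_before (loc k) t i)) \<and>
     (\<forall>k t i. present leave k t \<and> t > 0 \<and> loc_before (loc k) t i \<longrightarrow>
        (loc k t \<noteq> i \<longrightarrow>
            adj cen r i (loc k t) \<and> ang_eq (spos f g i t) (link cen i (loc k t)) \<and>
            \<not> occupied_before leave loc k t (loc k t)) \<and>
        (loc k t = i \<longrightarrow>
            (\<forall>j. adj cen r i j \<and> ang_eq (spos f g i t) (link cen i j) \<longrightarrow>
                 occupied_before leave loc k t j)))"

text \<open>Paths along rings: a nonempty list of arcs (i, a, l): on circle i, starting at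
  angle a, moving length l in direction g i.\<close>

definition arc_circ :: "'c \<times> real \<times> real \<Rightarrow> 'c" where "arc_circ A = fst A"
definition arc_start :: "'c \<times> real \<times> real \<Rightarrow> real" where "arc_start A = fst (snd A)"
definition arc_len :: "'c \<times> real \<times> real \<Rightarrow> real" where "arc_len A = snd (snd A)"
definition arc_end :: "('c \<Rightarrow> real) \<Rightarrow> 'c \<times> real \<times> real \<Rightarrow> real" where
  "arc_end g A = arc_start A + g (arc_circ A) * arc_len A"

definition path_length :: "('c \<times> real \<times> real) list \<Rightarrow> real" where
  "path_length P = sum_list (map arc_len P)"

text \<open>ring_path cen r g P p q: P is a path along a ring from point p to point q, where a
  point is (circle, angle).  Each arc stops exactly at the first link position it
  reaches, where the path passes to the neighbouring circle at its link position.\<close>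
definition ring_path ::
  "('c \<Rightarrow> complex) \<Rightarrow> real \<Rightarrow> ('c \<Rightarrow> real) \<Rightarrow> ('c \<times> real \<times> real) list \<Rightarrow>
   'c \<times> real \<Rightarrow> 'c \<times> real \<Rightarrow> bool" where
  "ring_path cen r g P p q \<longleftrightarrow>
     P \<noteq> [] \<and>
     fst p = arc_circ (hd P) \<and> ang_eq (snd p) (arc_start (hd P)) \<and>
     fst q = arc_circ (last P) \<and> ang_eq (snd q) (arc_end g (last P)) \<and>
     (\<forall>m < length P. 0 \<le> arc_len (P!m) \<and>
        (\<forall>s. 0 < s \<and> s < arc_len (P!m) \<longrightarrow>
           \<not> (\<exists>j. adj cen r (arc_circ (P!m)) j \<and>
                  ang_eq (arc_start (P!m) + g (arc_circ (P!m)) * s) (link cen (arc_circ (P!m)) j)))) \<and>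
     (\<forall>m. 0 < m \<and> m + 1 < length P \<longrightarrow> 0 < arc_len (P!m)) \<and>
     (\<forall>m. m + 1 < length P \<longrightarrow>
        adj cen r (arc_circ (P!m)) (arc_circ (P!(m+1))) \<and>
        ang_eq (arc_end g (P!m)) (link cen (arc_circ (P!m)) (arc_circ (P!(m+1)))) \<and>
        ang_eq (arc_start (P!(m+1))) (link cen (arc_circ (P!(m+1))) (arc_circ (P!m))))"

end

theory Submission
  imports Defs
begin

text \<open>Read every angle on circle i as the time (mod 1) at which the schedule puts a robot
  there.  An arc of length l then takes time l/(2\<pi>), and synchronization says that the
  two link positions of an edge are reached at the same times, so passing along a link
  costs an integer amount of time.  Hence the length of a ring path, divided by 2\<pi>,
  is congruent mod 1 to the difference of the times of its endpoints, and two robots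
  present at time t both have time t.\<close>

lemma ang_eq_sym: "ang_eq a b \<Longrightarrow> ang_eq b a"
  unfolding ang_eq_def by (metis minus_diff_eq mult_minus_right of_int_minus)

lemma ang_eq_trans: "ang_eq a b \<Longrightarrow> ang_eq b c \<Longrightarrow> ang_eq a c"
  unfolding ang_eq_def
proof (elim exE)
  fix m n :: int
  assume "a - b = 2 * pi * of_int m" "b - c = 2 * pi * of_int n"
  then have "a - c = 2 * pi * of_int (m + n)" by (simp add: algebra_simps)
  then show "\<exists>k::int. a - c = 2 * pi * of_int k" by blast
qed

definition sched_time :: "('c \<Rightarrow> real) \<Rightarrow> ('c \<Rightarrow> real) \<Rightarrow> 'c \<Rightarrow> real \<Rightarrow> real" where
  "sched_time f g i a = g i * (a - f i) / (2 * pi)"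

lemma spos_sched_time:
  assumes "g i = 1 \<or> g i = -1"
  shows "spos f g i (sched_time f g i a) = a"
  using assms by (auto simp: spos_def sched_time_def)

lemma sched_time_spos:
  assumes "g i = 1 \<or> g i = -1"
  shows "sched_time f g i (spos f g i t) = t"
  using assms by (auto simp: spos_def sched_time_def)

lemma sched_time_move:
  assumes "g i = 1 \<or> g i = -1"
  shows "sched_time f g i (a + g i * l) - sched_time f g i a = l / (2 * pi)"
proof -
  have "g i * g i = 1" using assms by auto
  then show ?thesis by (simp add: sched_time_def field_simps)
qed

lemma ang_eq_sched_time_Ints:
  assumes "g i = 1 \<or> g i = -1" and "ang_eq a b"
  shows "sched_time f g i a - sched_time f g i b \<in> \<int>"
proof -
  obtain m :: int where "a - b = 2 * pi * of_int m"
    using assms(2) unfolding ang_eq_def by blast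
  then have "sched_time f g i a - sched_time f g i b = g i * of_int m"
    by (simp add: sched_time_def field_simps)
  then show ?thesis using assms(1) by auto
qed

lemma sync_schedule_link_time_Ints:
  assumes sync: "sync_schedule cen r f g" and "adj cen r i j"
    and a: "ang_eq a (link cen i j)" and b: "ang_eq b (link cen j i)"
  shows "sched_time f g j b - sched_time f g i a \<in> \<int>"
proof -
  have g: "\<And>k. g k = 1 \<or> g k = -1" using sync unfolding sync_schedule_def by blast
  define \<tau> where "\<tau> = sched_time f g i a"
  have "ang_eq (spos f g i \<tau>) (link cen i j)"
    using a by (simp add: spos_sched_time g \<tau>_def)
  then have "ang_eq (spos f g j \<tau>) (link cen j i)"
    using sync \<open>adj cen r i j\<close> unfolding sync_schedule_def by blast
  then have "ang_eq b (spos f g j \<tau>)" using b by (meson ang_eq_sym ang_eq_trans)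
  then have "sched_time f g j b - sched_time f g j (spos f g j \<tau>) \<in> \<int>"
    by (rule ang_eq_sched_time_Ints[where g=g and i=j, OF g])
  then show ?thesis by (simp add: sched_time_spos g \<tau>_def)
qed

lemma sum_list_telescope_Ints:
  fixes a b :: "'a \<Rightarrow> 'b::ring_1"
  assumes "xs \<noteq> []" and "\<And>m. m + 1 < length xs \<Longrightarrow> a (xs ! (m + 1)) - b (xs ! m) \<in> \<int>"
  shows "sum_list (map (\<lambda>x. b x - a x) xs) - (b (last xs) - a (hd xs)) \<in> \<int>"
  using assms
proof (induction xs)
  case Nil
  then show ?case by simp
next
  case (Cons x xs)
  show ?case
  proof (cases "xs = []")
    case True
    then show ?thesis by simp
  next
    case False
    have "sum_list (map (\<lambda>x. b x - a x) xs) - (b (last xs) - a (hd xs)) \<in> \<int>"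
      using Cons.IH[OF False] Cons.prems(2)[of "Suc _"] by simp
    moreover have "a (hd xs) - b x \<in> \<int>"
      using Cons.prems(2)[of 0] False by (simp add: hd_conv_nth)
    moreover have "sum_list (map (\<lambda>x. b x - a x) (x # xs)) - (b (last (x # xs)) - a (hd (x # xs)))
        = (sum_list (map (\<lambda>x. b x - a x) xs) - (b (last xs) - a (hd xs))) - (a (hd xs) - b x)"
      using False by (simp add: algebra_simps)
    ultimately show ?thesis by (metis Ints_diff)
  qed
qed

lemma ring_path_length_Ints:
  assumes sync: "sync_schedule cen r f g" and path: "ring_path cen r g P p q"
  shows "path_length P / (2 * pi)
           - (sched_time f g (fst q) (snd q) - sched_time f g (fst p) (snd p)) \<in> \<int>"
proof -
  have g: "\<And>k. g k = 1 \<or> g k = -1" using sync unfolding sync_schedule_def by blast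
  define S where "S A = sched_time f g (arc_circ A) (arc_start A)" for A
  define T where "T A = sched_time f g (arc_circ A) (arc_end g A)" for A
  have "P \<noteq> []" using path unfolding ring_path_def by blast
  define X where "X = sum_list (map (\<lambda>A. T A - S A) P)"
  have "X - (T (last P) - S (hd P)) \<in> \<int>"
    unfolding X_def
  proof (rule sum_list_telescope_Ints[OF \<open>P \<noteq> []\<close>])
    fix m assume "m + 1 < length P"
    then show "S (P ! (m + 1)) - T (P ! m) \<in> \<int>"
      using path unfolding ring_path_def S_def T_def
      by (blast intro: sync_schedule_link_time_Ints[OF sync])
  qed
  moreover have "sched_time f g (fst p) (snd p) - S (hd P) \<in> \<int>"
    and "sched_time f g (fst q) (snd q) - T (last P) \<in> \<int>"
    using path unfolding ring_path_def S_def T_def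
    by (metis ang_eq_sched_time_Ints g)+
  moreover have "X - (sched_time f g (fst q) (snd q) - sched_time f g (fst p) (snd p))
      = (X - (T (last P) - S (hd P))) - (sched_time f g (fst q) (snd q) - T (last P))
        + (sched_time f g (fst p) (snd p) - S (hd P))"
    by simp
  ultimately have "X - (sched_time f g (fst q) (snd q) - sched_time f g (fst p) (snd p)) \<in> \<int>"
    by (metis Ints_add Ints_diff)
  moreover have "X = path_length P / (2 * pi)"
    unfolding X_def path_length_def T_def S_def arc_end_def
    by (induction P) (simp_all add: sched_time_move g add_divide_distrib)
  ultimately show ?thesis by simp
qed

lemma path_length_nonneg: "ring_path cen r g P p q \<Longrightarrow> 0 \<le> path_length P"
  unfolding ring_path_def path_length_def
  by (intro sum_list_nonneg) (metis imageE in_set_conv_nth list.set_map)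

theorem lemma8:
  fixes cen :: "'c::finite \<Rightarrow> complex" and r :: real and f g :: "'c \<Rightarrow> real"
    and leave :: "'c \<Rightarrow> ereal" and loc :: "'c \<Rightarrow> real \<Rightarrow> 'c"
    and x y :: 'c and t :: real and P :: "('c \<times> real \<times> real) list"
  assumes "partial_scs cen r f g leave loc"
    and "present leave x t" and "present leave y t"
    and "ring_path cen r g P (loc x t, spos f g (loc x t) t) (loc y t, spos f g (loc y t) t)"
  shows "\<exists>n::nat. path_length P = 2 * pi * real n"
proof -
  have sync: "sync_schedule cen r f g" using assms(1) unfolding partial_scs_def by blast
  then have g: "\<And>i. g i = 1 \<or> g i = -1" unfolding sync_schedule_def by blast
  have "path_length P / (2 * pi) \<in> \<int>"
    using ring_path_length_Ints[OF sync assms(4)] by (simp add: sched_time_spos g)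
  then obtain k :: int where k: "path_length P = 2 * pi * of_int k"
    by (metis Ints_cases nonzero_mult_div_cancel_left divide_eq_eq pi_neq_zero
        mult_eq_0_iff zero_neq_numeral)
  moreover have "0 \<le> k"
    using path_length_nonneg[OF assms(4)] k pi_gt_zero by (simp add: zero_le_mult_iff)
  ultimately have "path_length P = 2 * pi * real (nat k)" by simp
  then show ?thesis by blast
qed

end
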